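(* Let $n\geq3$ and let $S_n$ act on $V=\mathbb{C}^n$ by its natural permutation representation. The $S_n$-invariant constant $2$-cochains $\kappa$ satisfying the mixed Jacobi identity $$[v_1,\kappa(v_2,v_3)]+[v_2,\kappa(v_3,v_1)]+[v_3,\kappa(v_1,v_2)]=0\ \text{ in } S(V)\#S_n \quad\text{for all } v_1,v_2,v_3\in V$$ are exactly the maps $\kappa^C_{\mathrm{tri}}$ defined below, for $c\in\mathbb{C}$.
   Context: $S_n$ acts by $\sigma e_i=e_{\sigma(i)}$; $V^g$ is the fixed space of $g$. $S(V)\#S_n$ is the skew group algebra $S(V)\otimes\mathbb{C}S_n$ with $(r\otimes g)(s\otimes h)=r(g\cdot s)\otimes gh$, and $[\cdot,\cdot]$ its commutator. A constant 2-cochain is $\kappa=\sum_g\kappa_gg$ with $\kappa_g:\bigwedge^2V\to\mathbb{C}$ linear, and $\kappa(v,w)=\sum_g\kappa_g(v,w)g$; it is $S_n$-invariant if $\kappa_g(v,w)=\kappa_{hgh^{-1}}(hv,hw)$ for all $g,h,v,w$. $\kappa^C_{\mathrm{tri}}$ is the constant 2-cochain supported on 3-cycles with, for each 3-cycle $(ijk)$, $\kappa^C_{(ijk)}(e_i,e_j)=\kappa^C_{(ijk)}(e_j,e_k)=\kappa^C_{(ijk)}(e_k,e_i)=c$ and $\kappa^C_{(ijk)}(e_l,e_m)=0$ whenever $e_l$ or $e_m$ lies in $V^{(ijk)}$. *)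

theory Defs
  imports "HOL-Analysis.Analysis" "HOL-Combinatorics.Permutations"
begin

text \<open>V = C^n is modelled as complex^'n with a finite index type 'n (n = CARD('n)).
  S_n is the set of permutations p of 'n (p permutes UNIV), acting by p e_i = e_(p i),
  i.e. (p . v) at coordinate j equals v at coordinate (inv p j).\<close>

definition perm_act :: "('n::finite \<Rightarrow> 'n) \<Rightarrow> complex^'n \<Rightarrow> complex^'n" where
  "perm_act p v = (\<chi> j. v $ (inv p j))"

text \<open>A constant 2-cochain: kappa g is a complex-bilinear alternating form on V
  (i.e. a linear map from the second exterior power of V to C), for each g in S_n.\<close>

definition alt_bilinear :: "(complex^'n \<Rightarrow> complex^'n \<Rightarrow> complex) \<Rightarrow> bool" where
  "alt_bilinear B \<longleftrightarrow>
     (\<forall>u v w. B (u + v) w = B u w + B v w) \<and>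
     (\<forall>u v w. B u (v + w) = B u v + B u w) \<and>
     (\<forall>(a::complex) v w. B (a *s v) w = a * B v w) \<and>
     (\<forall>(a::complex) v w. B v (a *s w) = a * B v w) \<and>
     (\<forall>v. B v v = 0)"

definition constant_2cochain :: "(('n::finite \<Rightarrow> 'n) \<Rightarrow> complex^'n \<Rightarrow> complex^'n \<Rightarrow> complex) \<Rightarrow> bool" where
  "constant_2cochain \<kappa> \<longleftrightarrow> (\<forall>g. g permutes UNIV \<longrightarrow> alt_bilinear (\<kappa> g))"

definition Sn_invariant :: "(('n::finite \<Rightarrow> 'n) \<Rightarrow> complex^'n \<Rightarrow> complex^'n \<Rightarrow> complex) \<Rightarrow> bool" where
  "Sn_invariant \<kappa> \<longleftrightarrow>
     (\<forall>g h v w. g permutes UNIV \<longrightarrow> h permutes UNIV \<longrightarrow>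
        \<kappa> g v w = \<kappa> (h \<circ> g \<circ> inv h) (perm_act h v) (perm_act h w))"

text \<open>Elements of the group algebra C S_n: coefficient functions on permutations.
  kappa(v,w) = sum_g kappa_g(v,w) g.\<close>

definition kappa_at :: "(('n::finite \<Rightarrow> 'n) \<Rightarrow> complex^'n \<Rightarrow> complex^'n \<Rightarrow> complex)
    \<Rightarrow> complex^'n \<Rightarrow> complex^'n \<Rightarrow> ('n \<Rightarrow> 'n) \<Rightarrow> complex" where
  "kappa_at \<kappa> v w = (\<lambda>g. if g permutes UNIV then \<kappa> g v w else 0)"

text \<open>Elements of S(V)#S_n of the form sum_g p_g \<otimes> g with each p_g in V = S^1(V)
  are represented by their coefficient functions g \<mapsto> p_g.  For v in V and
  a = sum_g a_g g in C S_n, the skew multiplication rule gives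
  (v \<otimes> 1)(1 \<otimes> g) = v \<otimes> g and (1 \<otimes> g)(v \<otimes> 1) = (g.v) \<otimes> g, hence
  [v, a] = sum_g a_g (v - g.v) \<otimes> g.\<close>

definition skew_comm :: "complex^'n \<Rightarrow> (('n::finite \<Rightarrow> 'n) \<Rightarrow> complex) \<Rightarrow> ('n \<Rightarrow> 'n) \<Rightarrow> complex^'n" where
  "skew_comm v a = (\<lambda>g. if g permutes UNIV then a g *s (v - perm_act g v) else 0)"

definition mixed_jacobi :: "(('n::finite \<Rightarrow> 'n) \<Rightarrow> complex^'n \<Rightarrow> complex^'n \<Rightarrow> complex) \<Rightarrow> bool" where
  "mixed_jacobi \<kappa> \<longleftrightarrow>
     (\<forall>v1 v2 v3. (\<lambda>g. skew_comm v1 (kappa_at \<kappa> v2 v3) g + skew_comm v2 (kappa_at \<kappa> v3 v1) g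
                      + skew_comm v3 (kappa_at \<kappa> v1 v2) g) = (\<lambda>g. 0))"

definition is_3cycle :: "('n \<Rightarrow> 'n) \<Rightarrow> bool" where
  "is_3cycle g \<longleftrightarrow> g permutes UNIV \<and> card {i. g i \<noteq> i} = 3"

text \<open>kappa^C_tri: for a 3-cycle g = (i j k) (so j = g i, k = g j) the unique alternating
  bilinear form with value c on (e_i,e_j),(e_j,e_k),(e_k,e_i) that vanishes when an
  argument lies in V^g is
  c (v_i w_j - v_j w_i + v_j w_k - v_k w_j + v_k w_i - v_i w_k)
  = c * sum_l (v_l w_(g l) - v_(g l) w_l); zero on non-3-cycles.\<close>

definition kappa_tri :: "complex \<Rightarrow> ('n::finite \<Rightarrow> 'n) \<Rightarrow> complex^'n \<Rightarrow> complex^'n \<Rightarrow> complex" where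
  "kappa_tri c g v w =
     (if is_3cycle g then c * (\<Sum>l\<in>UNIV. v $ l * w $ (g l) - v $ (g l) * w $ l) else 0)"

end

(* For a permutation g let K(a,b) = \<kappa>_g(e_a, e_b).  Evaluating the mixed Jacobi identity on
   e_a, e_b, e_c and reading off the e_m-coordinate gives linear relations among the entries of K;
   together with invariance of K under the centralizer of g they force K = 0 unless g is a
   3-cycle: a moved point outside {a, b, g a, g b}, a g-orbit of length at least 3 through a, or a
   transposition commuting with g each yields a relation killing K(a,b).  For a 3-cycle (x y z)
   the same relations leave only K(x,y) = K(y,z) = K(z,x), and since all 3-cycles are conjugate,
   S_n-invariance makes this value one constant c, i.e. \<kappa> = \<kappa>^C_tri.  Conversely \<kappa>^C_tri is
   invariant because conjugation merely reindexes its defining sum, and it satisfies the Jacobi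
   identity by a direct computation, using that g^-1 = g^2 for a 3-cycle g. *)

theory Submission
  imports Defs "HOL-Combinatorics.Cycles"
begin

section \<open>Permutations and three-cycles\<close>

lemma permutes_UNIV_map_distinct:
  assumes "distinct xs" "distinct ys" "length xs = length ys"
  shows "\<exists>h. h permutes UNIV \<and> map h xs = ys"
  using assms(3,1,2)
proof (induction xs ys rule: list_induct2)
  case Nil
  then show ?case using permutes_id by fastforce
next
  case (Cons x xs y ys)
  then obtain h where h: "h permutes UNIV" "map h xs = ys" by auto
  let ?h = "Transposition.transpose y (h x) \<circ> h"
  have fix_xs: "?h z = h z" if "z \<in> set xs" for z
  proof -
    have "h z \<in> set ys" using h(2) that by auto
    moreover have "h z \<noteq> h x"
      using that Cons(3) permutes_inj[OF h(1)] by (metis distinct.simps(2) injD)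
    ultimately show ?thesis using Cons(4) by (auto simp: Transposition.transpose_def)
  qed
  have "map ?h xs = map h xs" unfolding map_eq_conv using fix_xs by simp
  then have "map ?h xs = ys" using h(2) by simp
  moreover have "?h permutes UNIV" using h(1) by (simp add: permutes_compose permutes_swap_id)
  moreover have "?h x = y" by simp
  ultimately show ?case by auto
qed

lemma is_3cycle_orbit:
  assumes c3: "is_3cycle g" and xm: "g x \<noteq> x"
  shows "distinct [x, g x, g (g x)]" "{i. g i \<noteq> i} = {x, g x, g (g x)}" "g (g (g x)) = x"
proof -
  let ?M = "{i. g i \<noteq> i}"
  have gp: "g permutes UNIV" and cM: "card ?M = 3" using c3 unfolding is_3cycle_def by auto
  have fin: "finite ?M" using cM by (metis card.infinite zero_neq_numeral)
  have gi: "g u = g v \<longleftrightarrow> u = v" for u v using permutes_inj[OF gp] by (simp add: inj_eq)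
  have ym: "g (g x) \<noteq> g x" and zm: "g (g (g x)) \<noteq> g (g x)" using xm by (simp_all add: gi)
  have zx: "g (g x) \<noteq> x"
  proof
    assume e: "g (g x) = x"
    have "card {x, g x} \<noteq> card ?M" using xm cM by simp
    then have "?M \<noteq> {x, g x}" by metis
    moreover have "{x, g x} \<subseteq> ?M" using xm ym by auto
    ultimately obtain w where w: "g w \<noteq> w" "w \<noteq> x" "w \<noteq> g x" by auto
    have "g w \<noteq> x" "g w \<noteq> g x" using w e by (auto simp: gi)
    then have "card {x, g x, w, g w} = 4" using w xm by simp
    moreover have "{x, g x, w, g w} \<subseteq> ?M" using xm ym w by (auto simp: gi)
    ultimately have "4 \<le> card ?M" using card_mono[OF fin] by metis
    then show False using cM by simp
  qed
  then show d: "distinct [x, g x, g (g x)]" using xm ym by auto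
  have sub: "{x, g x, g (g x)} \<subseteq> ?M" using xm ym zm by blast
  moreover have "card {x, g x, g (g x)} = card ?M" using d cM by simp
  ultimately show M: "?M = {x, g x, g (g x)}" using card_subset_eq[OF fin] by blast
  have "g (g (g x)) \<in> ?M" using zm gi by simp
  then show "g (g (g x)) = x" using M zm zx by (auto simp: gi)
qed

lemma is_3cycle_moved_point:
  assumes "is_3cycle g"
  obtains x where "g x \<noteq> x"
proof -
  have "card {i. g i \<noteq> i} \<noteq> 0" using assms by (simp add: is_3cycle_def)
  then have "{i. g i \<noteq> i} \<noteq> {}" by (intro notI) simp
  then show ?thesis using that by blast
qed

lemma is_3cycleI:
  assumes "g permutes UNIV" "g a \<noteq> a" "g (g a) \<noteq> a" "{i. g i \<noteq> i} \<subseteq> {a, g a, g (g a)}"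
  shows "is_3cycle g"
proof -
  have gi: "g u = g v \<longleftrightarrow> u = v" for u v using permutes_inj[OF assms(1)] by (simp add: inj_eq)
  have "{i. g i \<noteq> i} = {a, g a, g (g a)}" using assms(2,4) by (auto simp: gi)
  moreover have "distinct [a, g a, g (g a)]" using assms(2,3) by (auto simp: gi)
  ultimately show ?thesis using assms(1) unfolding is_3cycle_def by simp
qed

lemma is_3cycle_eq_cycle_of_list:
  assumes "is_3cycle g" and "g x \<noteq> x"
  shows "g = cycle_of_list [x, g x, g (g x)]"
proof
  fix i
  note orbit = is_3cycle_orbit[OF assms]
  show "g i = cycle_of_list [x, g x, g (g x)] i"
  proof (cases "i \<in> {x, g x, g (g x)}")
    case True
    then show ?thesis using orbit(1,3) by (auto simp: Transposition.transpose_def)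
  next
    case False
    then have "g i = i" using orbit(2) by blast
    with False show ?thesis by (auto simp: Transposition.transpose_def)
  qed
qed

lemma is_3cycle_conjugate:
  assumes "is_3cycle g" "is_3cycle g'" and "g x \<noteq> x" "g' x' \<noteq> x'"
  obtains h where "h permutes UNIV" "h \<circ> g \<circ> inv h = g'" "h x = x'" "h (g x) = g' x'"
proof -
  obtain h where h: "h permutes UNIV" "map h [x, g x, g (g x)] = [x', g' x', g' (g' x')]"
    using permutes_UNIV_map_distinct[OF is_3cycle_orbit(1)[OF assms(1,3)] is_3cycle_orbit(1)[OF assms(2,4)]]
    by auto
  have "h \<circ> g \<circ> inv h = h \<circ> cycle_of_list [x, g x, g (g x)] \<circ> inv h"
    using is_3cycle_eq_cycle_of_list[OF assms(1,3)] by (rule arg_cong)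
  also have "\<dots> = cycle_of_list (map h [x, g x, g (g x)])"
    by (rule conjugation_of_cycle[OF is_3cycle_orbit(1)[OF assms(1,3)] permutes_bij[OF h(1)]])
  also have "\<dots> = g'"
    using h(2) is_3cycle_eq_cycle_of_list[OF assms(2,4)] by argo
  finally show ?thesis using that h by simp
qed

lemma moved_points_conjugate:
  assumes "h permutes UNIV"
  shows "{i. (h \<circ> g \<circ> inv h) i \<noteq> i} = h ` {i. g i \<noteq> i}"
proof -
  have "(h \<circ> g \<circ> inv h) i = i \<longleftrightarrow> g (inv h i) = inv h i" for i
    using permutes_inverses[OF assms] permutes_inj[OF assms] by (metis comp_apply inj_eq)
  then show ?thesis by (simp add: bij_image_Collect_eq permutes_bij[OF assms])
qed

lemma is_3cycle_conjugate_iff: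
  assumes "g permutes UNIV" "h permutes UNIV"
  shows "is_3cycle (h \<circ> g \<circ> inv h) \<longleftrightarrow> is_3cycle g"
proof -
  have "h \<circ> g \<circ> inv h permutes UNIV"
    by (metis assms permutes_compose permutes_inv)
  moreover have "card {i. (h \<circ> g \<circ> inv h) i \<noteq> i} = card {i. g i \<noteq> i}"
    unfolding moved_points_conjugate[OF assms(2)]
    by (rule card_image) (metis assms(2) permutes_inj inj_on_subset subset_UNIV)
  ultimately show ?thesis using assms(1) unfolding is_3cycle_def by simp
qed

lemma is_3cycle_inv:
  assumes "is_3cycle g"
  shows "inv g = g \<circ> g"
proof (rule inv_unique_comp)
  have "g (g (g i)) = i" for i
    using is_3cycle_orbit(3)[OF assms, of i] by (cases "g i = i") simp_all
  then show "g \<circ> (g \<circ> g) = id" "g \<circ> g \<circ> g = id" by (simp_all add: fun_eq_iff)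
qed

section \<open>Alternating bilinear forms\<close>

lemma alt_bilinear_antisym:
  assumes "alt_bilinear B"
  shows "B u v = - B v u"
proof -
  have add: "B (x + y) z = B x z + B y z" "B z (x + y) = B z x + B z y"
    and self: "B x x = 0" for x y z
    using assms unfolding alt_bilinear_def by blast+
  have "0 = B (u + v) (u + v)" by (rule self[symmetric])
  also have "\<dots> = B u v + B v u" unfolding add by (simp add: self)
  finally show ?thesis by (simp add: eq_neg_iff_add_eq_0)
qed

lemma alt_bilinear_sum_left:
  assumes "alt_bilinear B"
  shows "B (sum f A) w = (\<Sum>x\<in>A. B (f x) w)"
proof -
  have add: "B (u + v) w = B u w + B v w" for u v using assms by (simp add: alt_bilinear_def)
  then have "B 0 w = 0" by (metis add_cancel_right_right)
  from sum_comp_morphism[of "\<lambda>u. B u w" f A, OF this add] show ?thesis by (simp add: comp_def)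
qed

lemma alt_bilinear_sum_right:
  assumes "alt_bilinear B"
  shows "B v (sum f A) = (\<Sum>x\<in>A. B v (f x))"
proof -
  have add: "B v (u + w) = B v u + B v w" for u w using assms by (simp add: alt_bilinear_def)
  then have "B v 0 = 0" by (metis add_cancel_right_right)
  from sum_comp_morphism[of "\<lambda>u. B v u" f A, OF this add] show ?thesis by (simp add: comp_def)
qed

lemma alt_bilinear_basis_expansion:
  fixes B :: "complex^'n::finite \<Rightarrow> complex^'n \<Rightarrow> complex"
  assumes "alt_bilinear B"
  shows "B v w = (\<Sum>a\<in>UNIV. \<Sum>b\<in>UNIV. v$a * w$b * B (axis a 1) (axis b 1))"
proof -
  have "B v w = B (\<Sum>a\<in>UNIV. v$a *s axis a 1) (\<Sum>b\<in>UNIV. w$b *s axis b 1)"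
    by (simp add: basis_expansion)
  also have "\<dots> = (\<Sum>a\<in>UNIV. \<Sum>b\<in>UNIV. B (v$a *s axis a 1) (w$b *s axis b 1))"
    by (simp add: alt_bilinear_sum_left[OF assms] alt_bilinear_sum_right[OF assms], rule sum.swap)
  also have "\<dots> = (\<Sum>a\<in>UNIV. \<Sum>b\<in>UNIV. v$a * w$b * B (axis a 1) (axis b 1))"
  proof -
    have "B (c *s x) y = c * B x y" "B x (c *s y) = c * B x y" for c x y
      using assms unfolding alt_bilinear_def by blast+
    then show ?thesis by (simp only: mult.assoc mult.left_commute)
  qed
  finally show ?thesis .
qed

lemma alt_bilinear_eqI:
  fixes B C :: "complex^'n::finite \<Rightarrow> complex^'n \<Rightarrow> complex"
  assumes "alt_bilinear B" "alt_bilinear C"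
    and "\<And>a b. B (axis a 1) (axis b 1) = C (axis a 1) (axis b 1)"
  shows "B = C"
proof (intro ext)
  fix v w
  show "B v w = C v w"
    using alt_bilinear_basis_expansion[OF assms(1), of v w] alt_bilinear_basis_expansion[OF assms(2), of v w]
    by (simp add: assms(3))
qed

section \<open>The matrix of an invariant solution of the mixed Jacobi identity\<close>

text \<open>\<open>K\<close> stands for the matrix \<open>K a b = \<kappa> g (e_a) (e_b)\<close> of one component \<open>\<kappa>_g\<close>:
  \<open>jacobi\<close> is the \<open>e_m\<close>-coordinate of the mixed Jacobi identity at \<open>e_a, e_b, e_c\<close>, and
  \<open>commute_invariant\<close> is what \<open>S_n\<close>-invariance says for the centralizer of \<open>g\<close>.\<close>

locale invariant_jacobi_matrix =
  fixes g :: "'a \<Rightarrow> 'a" and K :: "'a \<Rightarrow> 'a \<Rightarrow> complex"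
  assumes permutes: "g permutes UNIV"
    and antisym: "K a b = - K b a"
    and jacobi: "K b c * (of_bool (a = m) - of_bool (g a = m))
      + K c a * (of_bool (b = m) - of_bool (g b = m))
      + K a b * (of_bool (c = m) - of_bool (g c = m)) = 0"
    and commute_invariant: "h permutes UNIV \<Longrightarrow> h \<circ> g = g \<circ> h \<Longrightarrow> K (h a) (h b) = K a b"
begin

lemma g_eq_iff: "g x = g y \<longleftrightarrow> x = y"
  using permutes_inj[OF permutes] by (simp add: inj_eq)

lemma K_diag: "K a a = 0"
  using antisym[of a a] by simp

lemma K_g_invariant: "K (g a) (g b) = K a b"
  using commute_invariant[OF permutes] by simp

lemma K_eq_0_if_moved_point_outside:
  assumes "g c \<noteq> c" "c \<notin> {a, b, g a, g b}"
  shows "K a b = 0"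
  using jacobi[of a b c c] assms by auto

lemma K_eq_0_if_long_orbit:
  assumes "g a \<noteq> a" "g (g a) \<noteq> a" "b \<noteq> g a" "g b \<noteq> a"
  shows "K a b = 0"
proof (cases "g (g a) = b")
  case False
  then show ?thesis using jacobi[of a b "g a" "g (g a)"] assms by (auto simp: g_eq_iff)
next
  case True
  have "K (g a) b = 0" using jacobi[of a "g a" b a] assms True by auto
  moreover have "K (g a) b = K b a" using jacobi[of a "g a" b "g a"] assms True by (auto simp: g_eq_iff)
  ultimately show ?thesis using antisym[of a b] by simp
qed

lemma K_eq_0_if_identity:
  assumes "g = id"
  shows "K a b = 0"
proof -
  have "K b a = K a b"
    using commute_invariant[of "Transposition.transpose a b" a b] assms by (simp add: permutes_swap_id)
  then show ?thesis using antisym[of a b] by simp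
qed

lemma K_eq_0_if_transposition:
  assumes moved: "g p \<noteq> p" and support: "{i. g i \<noteq> i} \<subseteq> {p, g p}"
  shows "K a b = 0"
proof -
  define q where "q = g p"
  have "g (g p) \<in> {p, g p}" using support g_eq_iff moved by blast
  then have gq: "g q = p" using moved by (auto simp: q_def g_eq_iff)
  have pq: "p \<noteq> q" using moved q_def by simp
  have fixed: "g x = x" if "x \<noteq> p" "x \<noteq> q" for x using support that q_def by blast
  have "K x y = 0" if x: "x \<noteq> p" "x \<noteq> q" for x y
  proof (cases "y = p \<or> y = q")
    case True
    have "K x p = K x q" using K_g_invariant[of x p] fixed[OF x] q_def by simp
    moreover have "K q x = K x p" using jacobi[of x p q p] fixed[OF x] x pq gq q_def by simp
    ultimately show ?thesis using True antisym[of q x] by auto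
  next
    case False
    then show ?thesis using K_eq_0_if_moved_point_outside[of p x y] moved x fixed q_def by auto
  qed
  moreover have "K p q = 0" using K_g_invariant[of p q] gq q_def antisym[of p q] by simp
  ultimately show ?thesis using antisym[of a b] K_diag by (cases "a = p \<or> a = q"; cases "b = p \<or> b = q") auto
qed

lemma K_eq_0_if_double_transposition:
  assumes "g a \<noteq> a" "g (g a) = a" "g (g b) = b" "b \<noteq> a" "b \<noteq> g a"
    and support: "{i. g i \<noteq> i} \<subseteq> {a, g a, b, g b}"
  shows "K a b = 0"
proof -
  define h where "h = Transposition.transpose a (g a)"
  have "h \<circ> g = g \<circ> h"
  proof
    fix i
    have "g i \<notin> {a, g a}" if "i \<notin> {a, g a}" using that assms(2) by (auto simp: g_eq_iff)
    then show "(h \<circ> g) i = (g \<circ> h) i" using assms(2) by (auto simp: h_def Transposition.transpose_def)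
  qed
  then have "K (g a) b = K a b"
    using commute_invariant[of h a b] assms by (simp add: h_def permutes_swap_id Transposition.transpose_def)
  moreover have "g b \<noteq> a" using assms(3,5) by auto
  then have "K (g a) b = K b a"
    using jacobi[of a "g a" b a] assms by (auto simp: g_eq_iff)
  ultimately show ?thesis using antisym[of a b] by simp
qed

lemma K_eq_0_if_moved_pair:
  assumes not_3cycle: "\<not> is_3cycle g"
    and not_transposition: "\<And>p. g p \<noteq> p \<Longrightarrow> \<exists>c. g c \<noteq> c \<and> c \<noteq> p \<and> c \<noteq> g p"
    and a: "g a \<noteq> a" and b: "g b \<noteq> b" and "b \<noteq> a"
    and support: "{i. g i \<noteq> i} \<subseteq> {a, b, g a, g b}"
  shows "K a b = 0"
proof -
  have not_successor: "q \<noteq> g p" if "g p \<noteq> p" "{p, q} = {a, b}" for p q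
  proof
    assume q: "q = g p"
    then have "{i. g i \<noteq> i} \<subseteq> {p, g p, g (g p)}" using support that(2) by auto
    moreover then have "g (g p) \<noteq> p" using not_transposition[OF that(1)] by auto
    ultimately show False using is_3cycleI[OF permutes that(1)] not_3cycle by blast
  qed
  have "b \<noteq> g a" "g b \<noteq> a" using not_successor[OF a] not_successor[OF b] by auto
  then consider "g (g a) \<noteq> a" | "g (g b) \<noteq> b" | "g (g a) = a" "g (g b) = b" by blast
  then show ?thesis
  proof cases
    case 1
    then show ?thesis using K_eq_0_if_long_orbit[OF a] \<open>b \<noteq> g a\<close> \<open>g b \<noteq> a\<close> by blast
  next
    case 2
    then have "K b a = 0" using K_eq_0_if_long_orbit[OF b] \<open>b \<noteq> g a\<close> \<open>g b \<noteq> a\<close> by auto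
    then show ?thesis using antisym[of a b] by simp
  next
    case 3
    then show ?thesis using K_eq_0_if_double_transposition a \<open>b \<noteq> a\<close> \<open>b \<noteq> g a\<close> support by blast
  qed
qed

lemma K_eq_0_if_moved:
  assumes not_3cycle: "\<not> is_3cycle g"
    and not_transposition: "\<And>p. g p \<noteq> p \<Longrightarrow> \<exists>c. g c \<noteq> c \<and> c \<noteq> p \<and> c \<noteq> g p"
    and a: "g a \<noteq> a"
  shows "K a b = 0"
proof (cases "\<exists>c. g c \<noteq> c \<and> c \<notin> {a, b, g a, g b}")
  case True
  then show ?thesis using K_eq_0_if_moved_point_outside by blast
next
  case False
  then have support: "{i. g i \<noteq> i} \<subseteq> {a, b, g a, g b}" by blast
  consider "b = a" | "g b = b" | "g b \<noteq> b" "b \<noteq> a" by blast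
  then show ?thesis
  proof cases
    case 1
    then show ?thesis using K_diag by simp
  next
    case 2
    show ?thesis
    proof (cases "g (g a) = a")
      case True
      then obtain c where "g c \<noteq> c" "c \<notin> {a, b, g a, g b}"
        using not_transposition[OF a] 2 by auto
      then show ?thesis using K_eq_0_if_moved_point_outside by blast
    next
      case False
      moreover have "b \<noteq> g a" "g b \<noteq> a" using a 2 g_eq_iff by metis+
      ultimately show ?thesis using K_eq_0_if_long_orbit[OF a] by blast
    qed
  next
    case 3
    then show ?thesis using K_eq_0_if_moved_pair[OF not_3cycle not_transposition a] support by blast
  qed
qed

lemma K_eq_0_unless_3cycle:
  assumes "\<not> is_3cycle g"
  shows "K a b = 0"
proof -
  consider "g = id" | p where "g p \<noteq> p" "{i. g i \<noteq> i} \<subseteq> {p, g p}"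
    | "g \<noteq> id" "\<And>p. g p \<noteq> p \<Longrightarrow> \<exists>c. g c \<noteq> c \<and> c \<noteq> p \<and> c \<noteq> g p"
    by blast
  then show ?thesis
  proof cases
    case 1
    then show ?thesis by (rule K_eq_0_if_identity)
  next
    case 2
    then show ?thesis by (rule K_eq_0_if_transposition)
  next
    case 3
    note K_moved = K_eq_0_if_moved[OF assms 3(2)]
    show ?thesis
    proof (cases "g a = a \<and> g b = b")
      case True
      obtain c where "g c \<noteq> c" using 3(1) by (auto simp: fun_eq_iff)
      then show ?thesis using K_eq_0_if_moved_point_outside[of c a b] True by auto
    next
      case False
      then show ?thesis using K_moved[of a b] K_moved[of b a] antisym[of a b] by auto
    qed
  qed
qed

lemma K_on_3cycle:
  assumes c3: "is_3cycle g" and x: "g x \<noteq> x"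
  shows "K a b = K x (g x) * (of_bool (g a = b) - of_bool (g b = a))"
proof -
  note orbit = is_3cycle_orbit[OF c3 x]
  have K_fixed: "K u v = 0" if "g u = u" for u v
  proof (cases "g v = v")
    case True
    then have "x \<notin> {u, v, g u, g v}" using x that by auto
    then show ?thesis using K_eq_0_if_moved_point_outside[OF x] by blast
  next
    case False
    have "g (g v) \<noteq> v" "u \<noteq> g v" "g u \<noteq> v" using orbit False that is_3cycle_orbit[OF c3 False]
      by (auto simp: g_eq_iff)
    then have "K v u = 0" using K_eq_0_if_long_orbit[OF False] by blast
    then show ?thesis using antisym[of u v] by simp
  qed
  show ?thesis
  proof (cases "g a = a \<or> g b = b")
    case True
    then show ?thesis using K_fixed[of a b] K_fixed[of b a] antisym[of a b] by (auto simp: g_eq_iff)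
  next
    case False
    define y z where "y = g x" and "z = g y"
    have gx: "g x = y" and gy: "g y = z" and gz: "g z = x" and d: "x \<noteq> y" "y \<noteq> z" "z \<noteq> x"
      using orbit(1,3) by (auto simp: y_def z_def)
    have a: "a = x \<or> a = y \<or> a = z" and b: "b = x \<or> b = y \<or> b = z"
      using False orbit(2) by (auto simp: y_def z_def)
    have K_cyclic: "K y z = K x y" "K z x = K x y"
      using K_g_invariant[of x y] K_g_invariant[of y z] by (simp_all add: gx gy gz)
    have K_swap: "K y x = - K x y" "K z y = - K x y" "K x z = - K x y"
      using antisym[of y x] antisym[of z y] antisym[of x z] K_cyclic by simp_all
    from a b show ?thesis
      using gx gy gz d d[THEN not_sym] K_cyclic K_swap K_diag by (elim disjE) simp_all
  qed
qed

end

lemma perm_act_axis: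
  assumes "h permutes UNIV"
  shows "perm_act h (axis a (1::complex)) = axis (h a) 1"
  using permutes_inverses[OF assms] by (auto simp: perm_act_def axis_def vec_eq_iff)

lemma skew_comm_axis_nth:
  assumes "g permutes UNIV"
  shows "skew_comm (axis a 1) X g $ m = X g * (of_bool (a = m) - of_bool (g a = m))"
  using assms by (simp add: skew_comm_def perm_act_axis) (simp add: axis_def)

lemma mixed_jacobi_axis:
  assumes "mixed_jacobi \<kappa>" "g permutes UNIV"
  shows "\<kappa> g (axis b 1) (axis c 1) * (of_bool (a = m) - of_bool (g a = m))
       + \<kappa> g (axis c 1) (axis a 1) * (of_bool (b = m) - of_bool (g b = m))
       + \<kappa> g (axis a 1) (axis b 1) * (of_bool (c = m) - of_bool (g c = m)) = 0"
proof -
  have "(skew_comm (axis a 1) (kappa_at \<kappa> (axis b 1) (axis c 1)) g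
      + skew_comm (axis b 1) (kappa_at \<kappa> (axis c 1) (axis a 1)) g
      + skew_comm (axis c 1) (kappa_at \<kappa> (axis a 1) (axis b 1)) g) $ m = 0"
    using assms(1) unfolding mixed_jacobi_def by (metis zero_index)
  then show ?thesis
    using assms(2) by (simp only: vector_add_component skew_comm_axis_nth kappa_at_def if_True)
qed

lemma Sn_invariant_axis:
  assumes "Sn_invariant \<kappa>" "g permutes UNIV" "h permutes UNIV"
  shows "\<kappa> (h \<circ> g \<circ> inv h) (axis (h a) 1) (axis (h b) 1) = \<kappa> g (axis a 1) (axis b 1)"
  using assms unfolding Sn_invariant_def by (metis perm_act_axis)

lemma invariant_jacobi_matrix_cochain:
  assumes "constant_2cochain \<kappa>" "Sn_invariant \<kappa>" "mixed_jacobi \<kappa>" "g permutes UNIV"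
  shows "invariant_jacobi_matrix g (\<lambda>a b. \<kappa> g (axis a 1) (axis b 1))"
proof
  have "alt_bilinear (\<kappa> g)" using assms(1,4) by (simp add: constant_2cochain_def)
  then show "\<kappa> g (axis a 1) (axis b 1) = - \<kappa> g (axis b 1) (axis a 1)" for a b
    by (rule alt_bilinear_antisym)
  show "\<kappa> g (axis (h a) 1) (axis (h b) 1) = \<kappa> g (axis a 1) (axis b 1)"
    if h: "h permutes UNIV" "h \<circ> g = g \<circ> h" for h a b
  proof -
    have "h \<circ> g \<circ> inv h = g \<circ> (h \<circ> inv h)" by (simp add: h(2) comp_assoc)
    then have "h \<circ> g \<circ> inv h = g" by (simp add: permutes_inv_o[OF h(1)])
    then show ?thesis using Sn_invariant_axis[OF assms(2,4) h(1), of a b] by simp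
  qed
qed (fact assms(4), fact mixed_jacobi_axis[OF assms(3,4)])

lemma three_cycle_coefficient_constant:
  fixes \<kappa> :: "('n::finite \<Rightarrow> 'n) \<Rightarrow> complex^'n \<Rightarrow> complex^'n \<Rightarrow> complex"
  assumes "Sn_invariant \<kappa>"
  obtains c where "\<And>g x. is_3cycle g \<Longrightarrow> g x \<noteq> x \<Longrightarrow> \<kappa> g (axis x 1) (axis (g x) 1) = c"
proof (cases "\<exists>(g :: 'n \<Rightarrow> 'n) x. is_3cycle g \<and> g x \<noteq> x")
  case True
  then obtain g\<^sub>0 :: "'n \<Rightarrow> 'n" and x\<^sub>0 where g\<^sub>0: "is_3cycle g\<^sub>0" "g\<^sub>0 x\<^sub>0 \<noteq> x\<^sub>0" by blast
  have "\<kappa> g (axis x 1) (axis (g x) 1) = \<kappa> g\<^sub>0 (axis x\<^sub>0 1) (axis (g\<^sub>0 x\<^sub>0) 1)"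
    if g: "is_3cycle g" "g x \<noteq> x" for g x
  proof -
    obtain h where h: "h permutes UNIV" "h \<circ> g\<^sub>0 \<circ> inv h = g" "h x\<^sub>0 = x" "h (g\<^sub>0 x\<^sub>0) = g x"
      using is_3cycle_conjugate[OF g\<^sub>0(1) g(1) g\<^sub>0(2) g(2)] .
    have "g\<^sub>0 permutes UNIV" using g\<^sub>0(1) by (simp add: is_3cycle_def)
    from Sn_invariant_axis[OF assms this h(1), of x\<^sub>0 "g\<^sub>0 x\<^sub>0"] show ?thesis by (simp only: h(2-4))
  qed
  then show ?thesis using that by blast
next
  case False
  then show ?thesis using that[of 0] by blast
qed

section \<open>The cochain \<open>kappa_tri\<close>\<close>

lemma alt_bilinear_kappa_tri: "alt_bilinear (kappa_tri c g)"
  unfolding alt_bilinear_def kappa_tri_def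
  by (simp add: algebra_simps sum.distrib sum_subtractf sum_distrib_left)

lemma kappa_tri_axis:
  fixes g :: "'n::finite \<Rightarrow> 'n"
  shows "kappa_tri c g (axis a 1) (axis b 1)
     = (if is_3cycle g then c * (of_bool (g a = b) - of_bool (g b = a)) else 0)"
proof -
  have "(\<Sum>l\<in>UNIV. axis a 1 $ l * w $ g l) = w $ g a" for w :: "complex^'n"
    by (simp add: axis_def if_distrib[of "\<lambda>x. x * _"] cong: if_cong)
  moreover have "(\<Sum>l\<in>UNIV. v $ g l * axis b 1 $ l) = v $ g b" for v :: "complex^'n"
    by (simp add: axis_def if_distrib[of "\<lambda>x. _ * x"] cong: if_cong)
  ultimately show ?thesis by (simp add: kappa_tri_def sum_subtractf) (simp add: axis_def of_bool_def)
qed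

lemma Sn_invariant_kappa_tri: "Sn_invariant (kappa_tri c)"
  unfolding Sn_invariant_def
proof (intro allI impI)
  fix g h :: "'n::finite \<Rightarrow> 'n" and v w :: "complex^'n"
  assume g: "g permutes UNIV" and h: "h permutes UNIV"
  let ?F = "\<lambda>l. v $ l * w $ g l - v $ g l * w $ l"
  have "(\<Sum>l\<in>UNIV. perm_act h v $ l * perm_act h w $ (h \<circ> g \<circ> inv h) l
      - perm_act h v $ (h \<circ> g \<circ> inv h) l * perm_act h w $ l) = (\<Sum>l\<in>UNIV. ?F (inv h l))"
    by (simp add: perm_act_def permutes_inverses(2)[OF h])
  also have "\<dots> = sum ?F UNIV"
    using sum.permute[OF permutes_inv[OF h], of ?F] by (simp add: comp_def)
  finally show "kappa_tri c g v w = kappa_tri c (h \<circ> g \<circ> inv h) (perm_act h v) (perm_act h w)"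
    unfolding kappa_tri_def is_3cycle_conjugate_iff[OF g h] by simp
qed

lemma kappa_tri_3cycle:
  assumes c3: "is_3cycle g" and x: "g x \<noteq> x"
  shows "kappa_tri c g v w = c * ((v $ x * w $ g x - v $ g x * w $ x)
    + (v $ g x * w $ g (g x) - v $ g (g x) * w $ g x) + (v $ g (g x) * w $ x - v $ x * w $ g (g x)))"
proof -
  note orbit = is_3cycle_orbit[OF c3 x]
  let ?F = "\<lambda>l. v $ l * w $ g l - v $ g l * w $ l"
  have "?F i = 0" if "i \<notin> {x, g x, g (g x)}" for i
  proof -
    have "g i = i" using that orbit(2) by blast
    then show ?thesis by (simp add: mult.commute)
  qed
  then have "sum ?F UNIV = sum ?F {x, g x, g (g x)}"
    by (intro sum.mono_neutral_right) simp_all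
  also have "\<dots> = ?F x + ?F (g x) + ?F (g (g x))" using orbit(1) by (simp add: add.assoc)
  finally show ?thesis using c3 orbit(3) by (simp add: kappa_tri_def)
qed

text \<open>For a 3-cycle, \<open>inv g = g \<circ> g\<close>, so \<open>v1 $ g (g m)\<close> is the \<open>m\<close>-th coordinate of \<open>g \<cdot> v1\<close>.\<close>

lemma kappa_tri_jacobi_nth:
  assumes c3: "is_3cycle g"
  shows "kappa_tri c g v2 v3 * (v1 $ m - v1 $ g (g m)) + kappa_tri c g v3 v1 * (v2 $ m - v2 $ g (g m))
    + kappa_tri c g v1 v2 * (v3 $ m - v3 $ g (g m)) = 0"
proof -
  obtain x where x: "g x \<noteq> x" using is_3cycle_moved_point[OF c3] .
  note orbit = is_3cycle_orbit[OF c3 x]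
  have "m = x \<or> m = g x \<or> m = g (g x) \<or> g m = m" using orbit(2) by blast
  then show ?thesis
    by (elim disjE) (simp_all add: kappa_tri_3cycle[OF c3 x] orbit(3) algebra_simps)
qed

lemma mixed_jacobi_kappa_tri: "mixed_jacobi (kappa_tri c)"
  unfolding mixed_jacobi_def
proof (intro allI ext)
  fix v1 v2 v3 :: "complex^'n::finite" and g :: "'n \<Rightarrow> 'n"
  show "skew_comm v1 (kappa_at (kappa_tri c) v2 v3) g + skew_comm v2 (kappa_at (kappa_tri c) v3 v1) g
      + skew_comm v3 (kappa_at (kappa_tri c) v1 v2) g = 0"
  proof (cases "g permutes UNIV \<and> is_3cycle g")
    case True
    then show ?thesis
      using kappa_tri_jacobi_nth[of g c v2 v3 v1]
      by (simp add: vec_eq_iff skew_comm_def kappa_at_def perm_act_def is_3cycle_inv algebra_simps)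
  next
    case False
    then show ?thesis by (auto simp: skew_comm_def kappa_at_def kappa_tri_def)
  qed
qed

lemma Sn_invariant_cong:
  assumes "\<And>g. g permutes UNIV \<Longrightarrow> \<kappa> g = \<kappa>' g"
  shows "Sn_invariant \<kappa> \<longleftrightarrow> Sn_invariant \<kappa>'"
proof -
  have "h \<circ> g \<circ> inv h permutes UNIV" if "g permutes UNIV" "h permutes UNIV" for g h :: "'a \<Rightarrow> 'a"
    using that by (simp add: permutes_compose permutes_inv)
  then show ?thesis unfolding Sn_invariant_def by (simp add: assms cong: imp_cong)
qed

lemma mixed_jacobi_cong:
  assumes "\<And>g. g permutes UNIV \<Longrightarrow> \<kappa> g = \<kappa>' g"
  shows "mixed_jacobi \<kappa> \<longleftrightarrow> mixed_jacobi \<kappa>'"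
proof -
  have "kappa_at \<kappa> = kappa_at \<kappa>'" by (simp add: kappa_at_def assms fun_eq_iff)
  then show ?thesis by (simp add: mixed_jacobi_def)
qed

lemma invariant_jacobi_cochain_eq_kappa_tri:
  assumes "constant_2cochain \<kappa>" "Sn_invariant \<kappa>" "mixed_jacobi \<kappa>" "g permutes UNIV"
    and c: "\<And>g x. is_3cycle g \<Longrightarrow> g x \<noteq> x \<Longrightarrow> \<kappa> g (axis x 1) (axis (g x) 1) = c"
  shows "\<kappa> g = kappa_tri c g"
proof (rule alt_bilinear_eqI)
  interpret invariant_jacobi_matrix g "\<lambda>a b. \<kappa> g (axis a 1) (axis b 1)"
    using invariant_jacobi_matrix_cochain[OF assms(1-4)] .
  show "\<kappa> g (axis a 1) (axis b 1) = kappa_tri c g (axis a 1) (axis b 1)" for a b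
  proof (cases "is_3cycle g")
    case True
    obtain x where "g x \<noteq> x" using is_3cycle_moved_point[OF True] .
    then show ?thesis using K_on_3cycle[OF True] c[OF True] True by (simp add: kappa_tri_axis)
  next
    case False
    then show ?thesis using K_eq_0_unless_3cycle by (simp add: kappa_tri_axis)
  qed
qed (use assms(1,4) in \<open>simp_all add: constant_2cochain_def alt_bilinear_kappa_tri\<close>)

theorem corollary4p8:
  fixes \<kappa> :: "('n::finite \<Rightarrow> 'n) \<Rightarrow> complex^'n \<Rightarrow> complex^'n \<Rightarrow> complex"
  assumes "CARD('n) \<ge> 3"
    and "constant_2cochain \<kappa>"
  shows "(Sn_invariant \<kappa> \<and> mixed_jacobi \<kappa>) \<longleftrightarrow>
         (\<exists>c::complex. \<forall>g. g permutes UNIV \<longrightarrow> \<kappa> g = kappa_tri c g)"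
proof
  assume invariant_jacobi: "Sn_invariant \<kappa> \<and> mixed_jacobi \<kappa>"
  then obtain c where "\<And>g x. is_3cycle g \<Longrightarrow> g x \<noteq> x \<Longrightarrow> \<kappa> g (axis x 1) (axis (g x) 1) = c"
    using three_cycle_coefficient_constant by blast
  then show "\<exists>c. \<forall>g. g permutes UNIV \<longrightarrow> \<kappa> g = kappa_tri c g"
    using invariant_jacobi_cochain_eq_kappa_tri assms(2) invariant_jacobi by blast
next
  assume "\<exists>c. \<forall>g. g permutes UNIV \<longrightarrow> \<kappa> g = kappa_tri c g"
  then obtain c where "\<And>g. g permutes UNIV \<Longrightarrow> \<kappa> g = kappa_tri c g" by blast
  then show "Sn_invariant \<kappa> \<and> mixed_jacobi \<kappa>"
    using Sn_invariant_kappa_tri[of c] mixed_jacobi_kappa_tri[of c]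
    by (simp add: Sn_invariant_cong[of \<kappa> "kappa_tri c"] mixed_jacobi_cong[of \<kappa> "kappa_tri c"])
qed

end
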